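(* A finite simple graph $G$ belongs to $\mathcal{C}_3$ if and only if $\chi_c(G)<2$.
   Context: A circular ordering of a finite set is obtained by placing its elements at distinct points of a circle; formally, the set of triples $(x,y,z)$ of distinct elements such that clockwise from $x$ one meets $y$ before $z$. A homomorphism $(H,C_H)\to(G,C_G)$ of circularly ordered graphs is a map on vertices preserving edges such that $(f(x),f(y),f(z))\in C_G$ whenever $(x,y,z)\in C_H$ and $f(x),f(y),f(z)$ are pairwise distinct. $SP_3$ is the path $v_1v_2v_3$ with its (unique) circular ordering placing $v_1,v_2,v_3$ clockwise. $\mathcal{C}_3$ is the class of graphs $G$ admitting a circular ordering $C$ of $V(G)$ with no homomorphism from $SP_3$ to $(G,C)$. For integers $1\le q\le p$, $K_{p/q}$ is the graph on $\{0,\dots,p-1\}$ with $ij$ an edge iff $\min(|i-j|,p-|i-j|)\ge q$; $\chi_c(G)=\min\{p/q: G\to K_{p/q}\}$. *)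

theory Defs
  imports Complex_Main
begin

definition fin_simple_graph :: "'a set \<Rightarrow> ('a \<Rightarrow> 'a \<Rightarrow> bool) \<Rightarrow> bool" where
  "fin_simple_graph V E \<longleftrightarrow> finite V \<and> (\<forall>x y. E x y \<longrightarrow> x \<in> V \<and> y \<in> V)
     \<and> (\<forall>x y. E x y \<longrightarrow> E y x) \<and> (\<forall>x. \<not> E x x)"

definition cyc :: "real \<Rightarrow> real \<Rightarrow> real \<Rightarrow> bool" where
  "cyc a b c \<longleftrightarrow> (a < b \<and> b < c) \<or> (b < c \<and> c < a) \<or> (c < a \<and> a < b)"

text \<open>The circular ordering induced by placing the vertices at distinct points
  (positions f) of a circle: triples of distinct elements met clockwise in this order.\<close>
definition circ_order_of :: "'a set \<Rightarrow> ('a \<Rightarrow> real) \<Rightarrow> ('a \<times> 'a \<times> 'a) set" where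
  "circ_order_of V f = {(x, y, z). x \<in> V \<and> y \<in> V \<and> z \<in> V \<and>
      x \<noteq> y \<and> y \<noteq> z \<and> x \<noteq> z \<and> cyc (f x) (f y) (f z)}"

definition is_circ_order :: "'a set \<Rightarrow> ('a \<times> 'a \<times> 'a) set \<Rightarrow> bool" where
  "is_circ_order V C \<longleftrightarrow> (\<exists>f. inj_on f V \<and> C = circ_order_of V f)"

definition co_hom ::
  "'a set \<Rightarrow> ('a \<Rightarrow> 'a \<Rightarrow> bool) \<Rightarrow> ('a \<times> 'a \<times> 'a) set \<Rightarrow>
   'b set \<Rightarrow> ('b \<Rightarrow> 'b \<Rightarrow> bool) \<Rightarrow> ('b \<times> 'b \<times> 'b) set \<Rightarrow> ('a \<Rightarrow> 'b) \<Rightarrow> bool" where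
  "co_hom VH EH CH VG EG CG f \<longleftrightarrow>
     (\<forall>x\<in>VH. f x \<in> VG) \<and> (\<forall>x y. EH x y \<longrightarrow> EG (f x) (f y)) \<and>
     (\<forall>x y z. (x, y, z) \<in> CH \<longrightarrow> f x \<noteq> f y \<longrightarrow> f y \<noteq> f z \<longrightarrow> f x \<noteq> f z \<longrightarrow>
        (f x, f y, f z) \<in> CG)"

definition SP3_V :: "nat set" where "SP3_V = {1, 2, 3}"
definition SP3_E :: "nat \<Rightarrow> nat \<Rightarrow> bool" where
  "SP3_E x y \<longleftrightarrow> {x, y} = {1, 2} \<or> {x, y} = {2, 3}"
definition SP3_C :: "(nat \<times> nat \<times> nat) set" where
  "SP3_C = circ_order_of SP3_V real"

definition in_C3 :: "'a set \<Rightarrow> ('a \<Rightarrow> 'a \<Rightarrow> bool) \<Rightarrow> bool" where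
  "in_C3 V E \<longleftrightarrow> (\<exists>C. is_circ_order V C \<and>
      \<not> (\<exists>f. co_hom SP3_V SP3_E SP3_C V E C f))"

definition graph_hom :: "'a set \<Rightarrow> ('a \<Rightarrow> 'a \<Rightarrow> bool) \<Rightarrow> 'b set \<Rightarrow> ('b \<Rightarrow> 'b \<Rightarrow> bool) \<Rightarrow> ('a \<Rightarrow> 'b) \<Rightarrow> bool" where
  "graph_hom VH EH VG EG f \<longleftrightarrow> (\<forall>x\<in>VH. f x \<in> VG) \<and> (\<forall>x y. EH x y \<longrightarrow> EG (f x) (f y))"

definition Kpq_V :: "nat \<Rightarrow> nat set" where "Kpq_V p = {0..<p}"
definition Kpq_E :: "nat \<Rightarrow> nat \<Rightarrow> nat \<Rightarrow> nat \<Rightarrow> bool" where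
  "Kpq_E p q i j \<longleftrightarrow> i \<in> {0..<p} \<and> j \<in> {0..<p} \<and>
     min (nat \<bar>int i - int j\<bar>) (p - nat \<bar>int i - int j\<bar>) \<ge> q"

text \<open>Circular chromatic number: the minimum (here: infimum) of p/q over G \<rightarrow> K_{p/q}.\<close>
definition chi_c :: "'a set \<Rightarrow> ('a \<Rightarrow> 'a \<Rightarrow> bool) \<Rightarrow> real" where
  "chi_c V E = Inf {real p / real q | p q. 1 \<le> q \<and> q \<le> p \<and>
      (\<exists>f. graph_hom V E (Kpq_V p) (Kpq_E p q) f)}"

end

theory Submission
  imports Defs
begin

text \<open>Homomorphisms of circularly ordered graphs need not be injective. If \<open>uv\<close> is an edge,
  folding \<open>SP\<^sub>3\<close> onto it (\<open>v\<^sub>1, v\<^sub>3 \<mapsto> u\<close>, \<open>v\<^sub>2 \<mapsto> v\<close>) is a homomorphism for every circular ordering,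
  because the order condition only concerns triples with three distinct images. Hence \<open>\<C>\<^sub>3\<close>
  consists exactly of the edgeless graphs. On the other side, an edge \<open>ij\<close> of \<open>K\<^sub>p\<^sub>/\<^sub>q\<close> forces
  \<open>2q \<le> p\<close>, so \<open>\<chi>\<^sub>c(G) \<ge> 2\<close> as soon as \<open>G\<close> has an edge, while an edgeless graph maps to \<open>K\<^sub>1\<^sub>/\<^sub>1\<close>.\<close>

lemma fin_simple_graphD:
  assumes "fin_simple_graph V E"
  shows "finite V" and "E x y \<Longrightarrow> x \<in> V" and "E x y \<Longrightarrow> y \<in> V"
    and "E x y \<Longrightarrow> E y x" and "\<not> E x x"
  using assms unfolding fin_simple_graph_def by blast+

lemma co_hom_if_two_valued:
  assumes "graph_hom VH EH VG EG f" and "\<And>x. f x \<in> {u, v}"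
  shows "co_hom VH EH CH VG EG CG f"
proof -
  have "\<not> (f x \<noteq> f y \<and> f y \<noteq> f z \<and> f x \<noteq> f z)" for x y z
    using assms(2)[of x] assms(2)[of y] assms(2)[of z] by auto
  with assms(1) show ?thesis
    unfolding graph_hom_def co_hom_def by blast
qed

lemma SP3_E_cases:
  assumes "SP3_E x y"
  shows "(x = 1 \<and> y = 2) \<or> (x = 2 \<and> y = 1) \<or> (x = 2 \<and> y = 3) \<or> (x = 3 \<and> y = 2)"
  using assms unfolding SP3_E_def doubleton_eq_iff by blast

lemma graph_hom_SP3_fold:
  assumes "E u v" and "E v u" and "u \<in> V" and "v \<in> V"
  shows "graph_hom SP3_V SP3_E V E (\<lambda>i. if i = 2 then v else u)"
  unfolding graph_hom_def using assms by (auto dest: SP3_E_cases)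

lemma in_C3_imp_edgeless:
  assumes "fin_simple_graph V E" and "in_C3 V E"
  shows "\<not> E u v"
proof
  assume "E u v"
  with assms(1) have "E v u" "u \<in> V" "v \<in> V"
    by (simp_all add: fin_simple_graphD)
  then have "co_hom SP3_V SP3_E SP3_C V E C (\<lambda>i. if i = 2 then v else u)" for C
    using \<open>E u v\<close> by (intro co_hom_if_two_valued graph_hom_SP3_fold) auto
  with assms(2) show False
    unfolding in_C3_def by blast
qed

lemma finite_has_circ_order:
  assumes "finite V"
  shows "\<exists>C. is_circ_order V C"
proof -
  obtain g :: "'a \<Rightarrow> nat" where "inj_on g V"
    using finite_imp_inj_to_nat_seg[OF assms] by blast
  then have "inj_on (real \<circ> g) V"
    by (simp add: inj_on_def)
  then show ?thesis
    unfolding is_circ_order_def by blast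
qed

lemma no_co_hom_from_SP3_to_edgeless:
  assumes "\<And>x y. \<not> E x y"
  shows "\<not> co_hom SP3_V SP3_E SP3_C V E C f"
proof -
  have "SP3_E 1 2"
    unfolding SP3_E_def by simp
  with assms show ?thesis
    unfolding co_hom_def by blast
qed

lemma in_C3_iff_edgeless:
  assumes "fin_simple_graph V E"
  shows "in_C3 V E \<longleftrightarrow> (\<forall>x y. \<not> E x y)"
proof
  assume "\<forall>x y. \<not> E x y"
  then have "\<not> co_hom SP3_V SP3_E SP3_C V E C f" for C f
    by (simp add: no_co_hom_from_SP3_to_edgeless)
  moreover obtain C where "is_circ_order V C"
    using finite_has_circ_order[OF fin_simple_graphD(1)[OF assms]] by blast
  ultimately show "in_C3 V E"
    unfolding in_C3_def by blast
next
  assume "in_C3 V E"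
  then show "\<forall>x y. \<not> E x y"
    using in_C3_imp_edgeless[OF assms] by blast
qed

lemma chi_c_le_ratio:
  assumes "graph_hom V E (Kpq_V p) (Kpq_E p q) f" and "1 \<le> q" and "q \<le> p"
  shows "chi_c V E \<le> real p / real q"
  unfolding chi_c_def using assms by (intro cInf_lower bdd_belowI[of _ 0]) auto

lemma chi_c_greatest:
  assumes "graph_hom V E (Kpq_V p\<^sub>0) (Kpq_E p\<^sub>0 q\<^sub>0) f\<^sub>0" and "1 \<le> q\<^sub>0" and "q\<^sub>0 \<le> p\<^sub>0"
    and "\<And>p q f. graph_hom V E (Kpq_V p) (Kpq_E p q) f \<Longrightarrow> 1 \<le> q \<Longrightarrow> c \<le> real p / real q"
  shows "c \<le> chi_c V E"
  unfolding chi_c_def using assms by (intro cInf_greatest) blast+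

lemma Kpq_E_imp_double_le:
  assumes "Kpq_E p q i j"
  shows "2 * q \<le> p"
  using assms unfolding Kpq_E_def by linarith

lemma Kpq_E_1_iff:
  "Kpq_E n 1 i j \<longleftrightarrow> i < n \<and> j < n \<and> i \<noteq> j"
  unfolding Kpq_E_def by auto

lemma graph_hom_Kpq_card:
  assumes "fin_simple_graph V E"
  obtains g where "graph_hom V E (Kpq_V (card V)) (Kpq_E (card V) 1) g"
proof -
  obtain g where g: "bij_betw g V {0..<card V}"
    using ex_bij_betw_finite_nat[OF fin_simple_graphD(1)[OF assms]] by blast
  have "Kpq_E (card V) 1 (g x) (g y)" if "E x y" for x y
  proof -
    from that have "x \<in> V" "y \<in> V" "x \<noteq> y"
      using fin_simple_graphD[OF assms] by auto
    with g show ?thesis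
      unfolding Kpq_E_1_iff bij_betw_def inj_on_def by auto
  qed
  with g have "graph_hom V E (Kpq_V (card V)) (Kpq_E (card V) 1) g"
    unfolding graph_hom_def Kpq_V_def bij_betw_def by blast
  then show thesis ..
qed

lemma chi_c_ge_2_if_edge:
  assumes "fin_simple_graph V E" and "E u v"
  shows "2 \<le> chi_c V E"
proof -
  obtain g where g: "graph_hom V E (Kpq_V (card V)) (Kpq_E (card V) 1) g"
    using graph_hom_Kpq_card[OF assms(1)] .
  have "u \<in> V"
    using fin_simple_graphD(2)[OF assms] .
  then have "1 \<le> card V"
    using fin_simple_graphD(1)[OF assms(1)] by (simp add: Suc_le_eq card_gt_0_iff) blast
  moreover have "2 \<le> real p / real q"
    if "graph_hom V E (Kpq_V p) (Kpq_E p q) f" and "1 \<le> q" for p q f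
  proof -
    from that(1) assms(2) have "Kpq_E p q (f u) (f v)"
      unfolding graph_hom_def by blast
    then have "2 * real q \<le> real p"
      using Kpq_E_imp_double_le by (metis of_nat_le_iff of_nat_mult of_nat_numeral)
    with that(2) show ?thesis
      by (simp add: pos_le_divide_eq)
  qed
  ultimately show ?thesis
    using chi_c_greatest[OF g] by simp
qed

lemma chi_c_le_1_if_edgeless:
  assumes "\<And>x y. \<not> E x y"
  shows "chi_c V E \<le> 1"
proof -
  have "graph_hom V E (Kpq_V 1) (Kpq_E 1 1) (\<lambda>_. 0)"
    unfolding graph_hom_def Kpq_V_def using assms by simp
  then show ?thesis
    using chi_c_le_ratio[of V E 1 1] by simp
qed

lemma chi_c_lt_2_iff_edgeless:
  assumes "fin_simple_graph V E"
  shows "chi_c V E < 2 \<longleftrightarrow> (\<forall>x y. \<not> E x y)"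
proof
  assume "chi_c V E < 2"
  then show "\<forall>x y. \<not> E x y"
    using chi_c_ge_2_if_edge[OF assms] by force
next
  assume "\<forall>x y. \<not> E x y"
  then show "chi_c V E < 2"
    using chi_c_le_1_if_edgeless[of E V] by simp
qed

theorem mainTheorem15:
  fixes V :: "'a set" and E :: "'a \<Rightarrow> 'a \<Rightarrow> bool"
  assumes "fin_simple_graph V E"
  shows "in_C3 V E \<longleftrightarrow> chi_c V E < 2"
  using in_C3_iff_edgeless[OF assms] chi_c_lt_2_iff_edgeless[OF assms] by simp

end
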